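(* Let $R$ be a tolerance relation on $X=\{1,\ldots,n\}$ and let $A(R)$ be its tolerance algebra. Then $R$ is an equivalence relation if and only if $A(R)$ has no subalgebra isomorphic to $\mathfrak{A}_3$.
   Context: A tolerance relation on a set $X$ is a reflexive and symmetric relation $R\subset X\times X$. For $R$ a tolerance relation on $X=\{1,\ldots,n\}$, the tolerance algebra $A(R)$ is the complex vector space with basis $\{E_{ij}:(i,j)\in R\}$ (equivalently, the $n\times n$ complex matrices $a$ with $a_{ij}=0$ whenever $(i,j)\notin R$), with bilinear product determined by $E_{ij}\star E_{kl}=\delta_{jk}E_{il}$ if $(i,l)\in R$ and $E_{ij}\star E_{kl}=0$ otherwise, and involution $(E_{ij})^*=E_{ji}$ extended conjugate-linearly (i.e. $a\star b$ is the matrix product $ab$ with the entries in positions $(i,l)\notin R$ set to zero). $\mathfrak{A}_3$ denotes the tolerance algebra of the relation on $\{1,2,3\}$ with $1\sim 2$, $2\sim 3$, $1\not\sim 3$ (together with reflexivity and symmetry), i.e. $3\times 3$ matrices with vanishing $(1,3)$ and $(3,1)$ entries, with product the matrix product followed by setting the $(1,3)$ and $(3,1)$ entries to zero. *)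

theory Defs
  imports Complex_Main "HOL-Library.Numeral_Type"
begin

text \<open>Matrices indexed by a finite type 'n (playing the role of X = {1,...,n})
  are represented as functions 'n \<Rightarrow> 'n \<Rightarrow> complex.\<close>

definition tolerance :: "('n \<times> 'n) set \<Rightarrow> bool" where
  "tolerance R \<longleftrightarrow> refl R \<and> sym R"

definition tol_carrier :: "('n \<times> 'n) set \<Rightarrow> ('n \<Rightarrow> 'n \<Rightarrow> complex) set" where
  "tol_carrier R = {a. \<forall>i j. (i, j) \<notin> R \<longrightarrow> a i j = 0}"

definition tol_mult :: "('n::finite \<times> 'n) set \<Rightarrow> ('n \<Rightarrow> 'n \<Rightarrow> complex)
    \<Rightarrow> ('n \<Rightarrow> 'n \<Rightarrow> complex) \<Rightarrow> ('n \<Rightarrow> 'n \<Rightarrow> complex)" where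
  "tol_mult R a b = (\<lambda>i l. if (i, l) \<in> R then (\<Sum>j\<in>UNIV. a i j * b j l) else 0)"

definition tol_star :: "('n \<Rightarrow> 'n \<Rightarrow> complex) \<Rightarrow> ('n \<Rightarrow> 'n \<Rightarrow> complex)" where
  "tol_star a = (\<lambda>i j. cnj (a j i))"

definition mat_add :: "('n \<Rightarrow> 'n \<Rightarrow> complex) \<Rightarrow> ('n \<Rightarrow> 'n \<Rightarrow> complex) \<Rightarrow> ('n \<Rightarrow> 'n \<Rightarrow> complex)" where
  "mat_add a b = (\<lambda>i j. a i j + b i j)"

definition mat_smult :: "complex \<Rightarrow> ('n \<Rightarrow> 'n \<Rightarrow> complex) \<Rightarrow> ('n \<Rightarrow> 'n \<Rightarrow> complex)" where
  "mat_smult c a = (\<lambda>i j. c * a i j)"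

definition tol_subalgebra :: "('n::finite \<times> 'n) set \<Rightarrow> ('n \<Rightarrow> 'n \<Rightarrow> complex) set \<Rightarrow> bool" where
  "tol_subalgebra R S \<longleftrightarrow> S \<subseteq> tol_carrier R \<and> (\<lambda>i j. 0) \<in> S
     \<and> (\<forall>a\<in>S. \<forall>b\<in>S. mat_add a b \<in> S)
     \<and> (\<forall>c. \<forall>a\<in>S. mat_smult c a \<in> S)
     \<and> (\<forall>a\<in>S. \<forall>b\<in>S. tol_mult R a b \<in> S)
     \<and> (\<forall>a\<in>S. tol_star a \<in> S)"

definition tol_iso :: "('n::finite \<times> 'n) set \<Rightarrow> ('m::finite \<times> 'm) set
    \<Rightarrow> ('n \<Rightarrow> 'n \<Rightarrow> complex) set \<Rightarrow> ('m \<Rightarrow> 'm \<Rightarrow> complex) set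
    \<Rightarrow> (('n \<Rightarrow> 'n \<Rightarrow> complex) \<Rightarrow> ('m \<Rightarrow> 'm \<Rightarrow> complex)) \<Rightarrow> bool" where
  "tol_iso R R' S T f \<longleftrightarrow> bij_betw f S T
     \<and> (\<forall>a\<in>S. \<forall>b\<in>S. f (mat_add a b) = mat_add (f a) (f b))
     \<and> (\<forall>c. \<forall>a\<in>S. f (mat_smult c a) = mat_smult c (f a))
     \<and> (\<forall>a\<in>S. \<forall>b\<in>S. f (tol_mult R a b) = tol_mult R' (f a) (f b))
     \<and> (\<forall>a\<in>S. f (tol_star a) = tol_star (f a))"

text \<open>The relation on {1,2,3} (here the numeral type 3, whose elements are 1, 2, 3 = 0)
  with 1 ~ 2, 2 ~ 3, 1 not~ 3; A_3 is its tolerance algebra.\<close>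
definition R3 :: "(3 \<times> 3) set" where
  "R3 = {(i, j). \<not> ((i = 1 \<and> j = 3) \<or> (i = 3 \<and> j = 1))}"

end

theory Submission
  imports Defs "HOL-Analysis.Cartesian_Space"
begin

text \<open>If \<open>R\<close> is transitive, the truncation in the product of \<open>A(R)\<close> never removes
  anything, so \<open>A(R)\<close> is an algebra of ordinary matrices and hence associative, as is
  every subalgebra and every isomorphic copy of one. But \<open>\<AA>\<^sub>3\<close> is not associative:
  \<open>(E\<^sub>1\<^sub>2 E\<^sub>2\<^sub>3) E\<^sub>3\<^sub>2 = 0\<close> because \<open>1\<close> and \<open>3\<close> are not related, whereas
  \<open>E\<^sub>1\<^sub>2 (E\<^sub>2\<^sub>3 E\<^sub>3\<^sub>2) = E\<^sub>1\<^sub>2\<close>.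
  Conversely, a failure of transitivity \<open>i \<sim> j \<sim> k\<close>, \<open>i \<not>\<sim> k\<close> makes the matrices
  of \<open>A(R)\<close> supported on \<open>{i, j, k}\<close> a subalgebra which is a copy of \<open>\<AA>\<^sub>3\<close>.\<close>

definition mat_unit :: "'n \<Rightarrow> 'n \<Rightarrow> 'n \<Rightarrow> 'n \<Rightarrow> complex" where
  "mat_unit p q = (\<lambda>i j. if i = p \<and> j = q then 1 else 0)"

lemma mat_unit_in_tol_carrier: "(p, q) \<in> R \<Longrightarrow> mat_unit p q \<in> tol_carrier R"
  by (auto simp: mat_unit_def tol_carrier_def)

lemma tol_mult_mat_unit:
  "tol_mult R (mat_unit p q) (mat_unit q' r) =
     (if q = q' \<and> (p, r) \<in> R then mat_unit p r else (\<lambda>i j. 0))"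
proof -
  have entry: "(\<Sum>j\<in>UNIV. mat_unit p q i j * mat_unit q' r j l) =
        (if i = p \<and> q = q' \<and> l = r then 1 else 0)" for i l
  proof -
    have "(\<Sum>j\<in>UNIV. mat_unit p q i j * mat_unit q' r j l) =
          (\<Sum>j\<in>UNIV. if j = q then mat_unit p q i q * mat_unit q' r q l else 0)"
      by (rule sum.cong) (auto simp: mat_unit_def)
    then show ?thesis by (simp add: mat_unit_def)
  qed
  show ?thesis
    unfolding tol_mult_def entry by (intro ext) (auto simp: mat_unit_def)
qed

lemma tol_mult_zero_left: "tol_mult R (\<lambda>i j. 0) b = (\<lambda>i j. 0)"
  by (intro ext) (simp add: tol_mult_def)

lemma R3_mult_not_assoc:
  "tol_mult R3 (tol_mult R3 (mat_unit 1 2) (mat_unit 2 3)) (mat_unit 3 2) \<noteq>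
   tol_mult R3 (mat_unit 1 2) (tol_mult R3 (mat_unit 2 3) (mat_unit 3 2))"
proof -
  have "tol_mult R3 (tol_mult R3 (mat_unit 1 2) (mat_unit 2 3)) (mat_unit 3 2) = (\<lambda>i j. 0)"
    by (simp add: tol_mult_mat_unit R3_def tol_mult_zero_left)
  moreover have "tol_mult R3 (mat_unit 1 2) (tol_mult R3 (mat_unit 2 3) (mat_unit 3 2)) =
      mat_unit 1 2"
    by (simp add: tol_mult_mat_unit R3_def)
  moreover have "mat_unit (1::3) 2 1 2 \<noteq> 0"
    by (simp add: mat_unit_def)
  ultimately show ?thesis by metis
qed

lemma tol_mult_eq_matrix_mult:
  assumes "trans R" "a \<in> tol_carrier R" "b \<in> tol_carrier R"
  shows "tol_mult R a b = (\<lambda>i l. \<Sum>j\<in>UNIV. a i j * b j l)"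
proof (intro ext)
  fix i l
  have "(\<Sum>j\<in>UNIV. a i j * b j l) = 0" if "(i, l) \<notin> R"
  proof (intro sum.neutral ballI)
    fix j
    show "a i j * b j l = 0"
    proof (rule ccontr)
      assume "a i j * b j l \<noteq> 0"
      then have "(i, j) \<in> R" "(j, l) \<in> R"
        using assms(2,3) by (auto simp: tol_carrier_def)
      with \<open>trans R\<close> \<open>(i, l) \<notin> R\<close> show False
        by (meson transD)
    qed
  qed
  then show "tol_mult R a b i l = (\<Sum>j\<in>UNIV. a i j * b j l)"
    by (simp add: tol_mult_def)
qed

lemma tol_mult_in_tol_carrier: "tol_mult R a b \<in> tol_carrier R"
  by (simp add: tol_mult_def tol_carrier_def)

lemma tol_mult_assoc:
  assumes "trans R" "a \<in> tol_carrier R" "b \<in> tol_carrier R" "c \<in> tol_carrier R"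
  shows "tol_mult R (tol_mult R a b) c = tol_mult R a (tol_mult R b c)"
proof -
  have "tol_mult R (tol_mult R a b) c = (\<lambda>i l. \<Sum>k\<in>UNIV. tol_mult R a b i k * c k l)"
    by (rule tol_mult_eq_matrix_mult[OF assms(1) tol_mult_in_tol_carrier assms(4)])
  also have "\<dots> = (\<lambda>i l. \<Sum>k\<in>UNIV. (\<Sum>j\<in>UNIV. a i j * b j k) * c k l)"
    using assms by (simp add: tol_mult_eq_matrix_mult)
  also have "\<dots> = (\<lambda>i l. \<Sum>j\<in>UNIV. a i j * (\<Sum>k\<in>UNIV. b j k * c k l))"
    by (intro ext) (simp add: sum_distrib_left sum_distrib_right mult.assoc, rule sum.swap)
  also have "\<dots> = (\<lambda>i l. \<Sum>j\<in>UNIV. a i j * tol_mult R b c j l)"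
    using assms by (simp add: tol_mult_eq_matrix_mult)
  also have "\<dots> = tol_mult R a (tol_mult R b c)"
    by (rule tol_mult_eq_matrix_mult[OF assms(1,2) tol_mult_in_tol_carrier, symmetric])
  finally show ?thesis .
qed

lemma tol_iso_transfer_mult_assoc:
  assumes iso: "tol_iso R R' S T f"
    and closed: "\<forall>a\<in>S. \<forall>b\<in>S. tol_mult R a b \<in> S"
    and assoc: "\<And>a b c. a \<in> S \<Longrightarrow> b \<in> S \<Longrightarrow> c \<in> S \<Longrightarrow>
      tol_mult R (tol_mult R a b) c = tol_mult R a (tol_mult R b c)"
    and "a \<in> T" "b \<in> T" "c \<in> T"
  shows "tol_mult R' (tol_mult R' a b) c = tol_mult R' a (tol_mult R' b c)"
proof -
  have "T = f ` S"
    using iso by (simp add: tol_iso_def bij_betw_def)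
  then obtain a' b' c' where S: "a' \<in> S" "b' \<in> S" "c' \<in> S"
    and "a = f a'" "b = f b'" "c = f c'"
    using \<open>a \<in> T\<close> \<open>b \<in> T\<close> \<open>c \<in> T\<close> by blast
  moreover have hom: "\<forall>x\<in>S. \<forall>y\<in>S. f (tol_mult R x y) = tol_mult R' (f x) (f y)"
    using iso by (simp add: tol_iso_def)
  ultimately have "tol_mult R' (tol_mult R' a b) c = f (tol_mult R (tol_mult R a' b') c')"
    and "tol_mult R' a (tol_mult R' b c) = f (tol_mult R a' (tol_mult R b' c'))"
    using closed by simp_all
  then show ?thesis
    using assoc[OF S] by simp
qed

lemma not_tol_iso_R3_if_trans:
  assumes "trans R" "tol_subalgebra R S"
  shows "\<not> tol_iso R R3 S (tol_carrier R3) f"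
proof
  assume iso: "tol_iso R R3 S (tol_carrier R3) f"
  have "tol_mult R3 (tol_mult R3 (mat_unit 1 2) (mat_unit 2 3)) (mat_unit 3 2) =
      tol_mult R3 (mat_unit 1 2) (tol_mult R3 (mat_unit 2 3) (mat_unit 3 2))"
    using assms(2) tol_mult_assoc[OF assms(1)]
    by (intro tol_iso_transfer_mult_assoc[OF iso])
      (auto simp: tol_subalgebra_def mat_unit_in_tol_carrier R3_def)
  with R3_mult_not_assoc show False ..
qed

lemma tol_subalgebra_restrict:
  assumes "sym R"
  shows "tol_subalgebra R (tol_carrier (R \<inter> K \<times> K))"
proof -
  have mult: "tol_mult R a b \<in> tol_carrier (R \<inter> K \<times> K)"
    if a: "a \<in> tol_carrier (R \<inter> K \<times> K)" and b: "b \<in> tol_carrier (R \<inter> K \<times> K)" for a b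
  proof -
    have "(p, q) \<in> R \<inter> K \<times> K" if "tol_mult R a b p q \<noteq> 0" for p q
    proof -
      from that have "(p, q) \<in> R" "(\<Sum>j\<in>UNIV. a p j * b j q) \<noteq> 0"
        by (simp_all add: tol_mult_def split: if_splits)
      moreover from this(2) obtain j where "a p j * b j q \<noteq> 0"
        by (meson sum.not_neutral_contains_not_neutral)
      then have "(p, j) \<in> K \<times> K" "(j, q) \<in> K \<times> K"
        using a b unfolding tol_carrier_def by auto
      ultimately show ?thesis by auto
    qed
    then show ?thesis
      unfolding tol_carrier_def by blast
  qed
  have star: "tol_star a \<in> tol_carrier (R \<inter> K \<times> K)"
    if "a \<in> tol_carrier (R \<inter> K \<times> K)" for a
  proof -
    have "(q, p) \<notin> R \<inter> K \<times> K" if "(p, q) \<notin> R \<inter> K \<times> K" for p q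
      using that symD[OF \<open>sym R\<close>] by blast
    with that show ?thesis
      unfolding tol_carrier_def tol_star_def by auto
  qed
  show ?thesis
    unfolding tol_subalgebra_def using mult star
    by (auto simp: tol_carrier_def mat_add_def mat_smult_def)
qed

lemma bij_betw_tol_carrier_restrict:
  fixes g :: "'m \<Rightarrow> 'n"
  assumes "inj g" and R: "\<And>x y. (g x, g y) \<in> R \<longleftrightarrow> (x, y) \<in> R'"
  shows "bij_betw (\<lambda>a x y. a (g x) (g y))
    (tol_carrier (R \<inter> range g \<times> range g)) (tol_carrier R')"
proof (rule bij_betw_byWitness)
  define h where "h b = (\<lambda>p q. if p \<in> range g \<and> q \<in> range g
      then b (inv g p) (inv g q) else 0)" for b :: "'m \<Rightarrow> 'm \<Rightarrow> complex"
  show "\<forall>a\<in>tol_carrier (R \<inter> range g \<times> range g). h (\<lambda>x y. a (g x) (g y)) = a"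
    by (auto simp: h_def tol_carrier_def f_inv_into_f intro!: ext)
  show "\<forall>b\<in>tol_carrier R'. (\<lambda>x y. h b (g x) (g y)) = b"
    using \<open>inj g\<close> by (simp add: h_def)
  show "(\<lambda>a x y. a (g x) (g y)) ` tol_carrier (R \<inter> range g \<times> range g) \<subseteq> tol_carrier R'"
    using R by (auto simp: tol_carrier_def)
  show "h ` tol_carrier R' \<subseteq> tol_carrier (R \<inter> range g \<times> range g)"
    using R \<open>inj g\<close> by (auto simp: h_def tol_carrier_def)
qed

lemma tol_iso_restrict_embedding:
  fixes g :: "'m::finite \<Rightarrow> 'n::finite"
  assumes "inj g" and R: "\<And>x y. (g x, g y) \<in> R \<longleftrightarrow> (x, y) \<in> R'"
  shows "tol_iso R R' (tol_carrier (R \<inter> range g \<times> range g)) (tol_carrier R')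
    (\<lambda>a x y. a (g x) (g y))"
proof -
  have mult: "(\<lambda>x y. tol_mult R a b (g x) (g y)) =
      tol_mult R' (\<lambda>x y. a (g x) (g y)) (\<lambda>x y. b (g x) (g y))"
    if "a \<in> tol_carrier (R \<inter> range g \<times> range g)" for a b
  proof (intro ext)
    fix x y
    have "(\<Sum>l\<in>UNIV. a (g x) l * b l (g y)) = (\<Sum>l\<in>range g. a (g x) l * b l (g y))"
      using that by (intro sum.mono_neutral_right) (auto simp: tol_carrier_def)
    also have "\<dots> = (\<Sum>z\<in>UNIV. a (g x) (g z) * b (g z) (g y))"
      using \<open>inj g\<close> by (simp add: sum.reindex)
    finally show "tol_mult R a b (g x) (g y) =
        tol_mult R' (\<lambda>x y. a (g x) (g y)) (\<lambda>x y. b (g x) (g y)) x y"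
      by (simp add: tol_mult_def R)
  qed
  show ?thesis
    unfolding tol_iso_def using bij_betw_tol_carrier_restrict[OF assms] mult
    by (simp add: mat_add_def mat_smult_def tol_star_def)
qed

lemma R3_embedding:
  fixes R :: "('n \<times> 'n) set"
  assumes "refl R" "sym R" "(i, j) \<in> R" "(j, k) \<in> R" "(i, k) \<notin> R"
  shows "\<exists>g :: 3 \<Rightarrow> 'n. inj g \<and> (\<forall>x y. (g x, g y) \<in> R \<longleftrightarrow> (x, y) \<in> R3)"
proof -
  define g :: "3 \<Rightarrow> 'n" where "g x = (if x = 1 then i else if x = 2 then j else k)" for x
  have "i \<noteq> j" "j \<noteq> k" "i \<noteq> k"
    using assms by (auto simp: refl_on_def)
  then have "inj g"
    unfolding inj_def g_def using exhaust_3 by auto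
  moreover have "(g x, g y) \<in> R \<longleftrightarrow> (x, y) \<in> R3" for x y
    using assms exhaust_3[of x] exhaust_3[of y]
    by (auto simp: g_def R3_def refl_on_def dest: symD)
  ultimately show ?thesis by blast
qed

theorem lemma3p6:
  fixes R :: "('n::finite \<times> 'n) set"
  assumes "tolerance R"
  shows "equiv UNIV R \<longleftrightarrow>
    \<not> (\<exists>S f. tol_subalgebra R S \<and> tol_iso R R3 S (tol_carrier R3) f)"
proof
  assume "equiv UNIV R"
  then show "\<not> (\<exists>S f. tol_subalgebra R S \<and> tol_iso R R3 S (tol_carrier R3) f)"
    using not_tol_iso_R3_if_trans by (auto simp: equiv_def)
next
  assume no_copy: "\<not> (\<exists>S f. tol_subalgebra R S \<and> tol_iso R R3 S (tol_carrier R3) f)"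
  have "refl R" "sym R"
    using assms by (simp_all add: tolerance_def)
  moreover have "trans R"
  proof (rule transI, rule ccontr)
    fix i j k
    assume "(i, j) \<in> R" "(j, k) \<in> R" "(i, k) \<notin> R"
    then obtain g :: "3 \<Rightarrow> 'n" where "inj g" "\<And>x y. (g x, g y) \<in> R \<longleftrightarrow> (x, y) \<in> R3"
      using R3_embedding \<open>refl R\<close> \<open>sym R\<close> by metis
    then show False
      using no_copy tol_subalgebra_restrict[OF \<open>sym R\<close>] tol_iso_restrict_embedding by blast
  qed
  ultimately show "equiv UNIV R" by (simp add: equiv_def)
qed

end
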